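(* Let $n\in\mathbb{N}$ and $d\geq 3$. There exists an injective map $\Phi:\mathcal{P}_{n,d}\to\mathcal{P}_{n(n+1),d-1}$ such that $$\Phi(\mathcal{J}^{\rm lin}_{n,d})=\mathcal{J}^{\rm lin}_{n(n+1),d-1;n}\cap \Phi(\mathcal{P}_{n,d}),\qquad \Phi(\mathcal{J}_{n,d})=\mathcal{J}_{n(n+1),d-1;n}\cap \Phi(\mathcal{P}_{n,d}).$$
   Context: A polynomial system is a map $F:\mathbb{C}^n\to\mathbb{C}^n$ all of whose coordinate functions $F_j$ are polynomials; $\mathcal{P}_n$ denotes the set of these, and $\mathcal{P}_{n,d}$ the subset with total degree $\max_j\deg F_j\leq d$. The Jacobian matrix is $J_F(z)=(\partial F_j/\partial z_i)_{1\le i,j\le n}$. $\mathcal{J}^{\rm lin}_{n}$ is the set of $F\in\mathcal{P}_n$ with $\det J_F(z)=c$ for a constant $c\in\mathbb{C}^\times$ (independent of $z$), and $\mathcal{J}_n$ is the set of $F\in\mathcal{P}_n$ that are bijective with polynomial inverse; $\mathcal{J}^{\rm lin}_{n,d}=\mathcal{J}^{\rm lin}_n\cap\mathcal{P}_{n,d}$, $\mathcal{J}_{n,d}=\mathcal{J}_n\cap\mathcal{P}_{n,d}$. Partial versions: for $0\le n'\le n$ write $z=(z_1,z_2)\in\mathbb{C}^{n'}\times\mathbb{C}^{n-n'}$ and $F=(F_1,F_2)$ accordingly, and set $R(z_2;z_1):=F_2(z_1,z_2)$, viewed as a polynomial system in the variables $z_2\in\mathbb{C}^{n-n'}$ depending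 on the parameters $z_1$. When for each $z_1$ the map $R(\cdot;z_1)$ is in $\mathcal{J}_{n-n'}$, denote by $R^{-1}(\cdot;z_1)$ its inverse, so $R^{-1}(R(z_2;z_1);z_1)=z_2$. - $\mathcal{J}_{n,d;n'}$ is the set of $F\in\mathcal{P}_{n,d}$ such that $R(\cdot;z_1)\in\mathcal{J}_{n-n'}$ for all $z_1\in\mathbb{C}^{n'}$, and such that $F$ restricted to $F^{-1}(\mathbb{C}^{n'}\times\{0\})$ is a bijection onto $\mathbb{C}^{n'}\times\{0\}$ whose inverse $y_1\mapsto F^{-1}(y_1,0)$ is a polynomial map $\mathbb{C}^{n'}\to\mathbb{C}^{n}$. - $\mathcal{J}^{\rm lin}_{n,d;n'}$ is the set of $F\in\mathcal{P}_{n,d}$ such that $R(\cdot;z_1)\in\mathcal{J}_{n-n'}$ for all $z_1\in\mathbb{C}^{n'}$ and there is a constant $c\in\mathbb{C}^\times$ with $\det J_F(z_1,R^{-1}(0;z_1))=c$ for all $z_1\in\mathbb{C}^{n'}$. Here the dimension $n(n+1)$ is split as $n'=n$ first coordinates and $n^2$ remaining coordinates. *)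

theory Defs
  imports Complex_Main "HOL-Analysis.Derivative" "Jordan_Normal_Form.Determinant"
begin

(* Points of C^m are represented as functions nat => complex vanishing at indices >= m. *)
definition Cn :: "nat \<Rightarrow> (nat \<Rightarrow> complex) set" where
  "Cn m = {z. \<forall>i. m \<le> i \<longrightarrow> z i = 0}"

definition exps :: "nat \<Rightarrow> nat \<Rightarrow> (nat \<Rightarrow> nat) set" where
  "exps m d = {\<alpha>. (\<forall>i. m \<le> i \<longrightarrow> \<alpha> i = 0) \<and> (\<Sum>i<m. \<alpha> i) \<le> d}"

definition polyfun :: "nat \<Rightarrow> nat \<Rightarrow> ((nat \<Rightarrow> complex) \<Rightarrow> complex) \<Rightarrow> bool" where
  "polyfun m d f \<longleftrightarrow> (\<exists>c. \<forall>z. f z = (\<Sum>\<alpha>\<in>exps m d. c \<alpha> * (\<Prod>i<m. z i ^ \<alpha> i)))"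

definition Pgen :: "nat \<Rightarrow> nat \<Rightarrow> nat \<Rightarrow> ((nat \<Rightarrow> complex) \<Rightarrow> (nat \<Rightarrow> complex)) set" where
  "Pgen m k d = {F. (\<forall>j<k. polyfun m d (\<lambda>z. F z j)) \<and> (\<forall>z j. k \<le> j \<longrightarrow> F z j = 0)}"

definition Pgen_all :: "nat \<Rightarrow> nat \<Rightarrow> ((nat \<Rightarrow> complex) \<Rightarrow> (nat \<Rightarrow> complex)) set" where
  "Pgen_all m k = {F. \<exists>d. F \<in> Pgen m k d}"

definition Pnd :: "nat \<Rightarrow> nat \<Rightarrow> ((nat \<Rightarrow> complex) \<Rightarrow> (nat \<Rightarrow> complex)) set" where
  "Pnd n d = Pgen n n d"

definition Pn :: "nat \<Rightarrow> ((nat \<Rightarrow> complex) \<Rightarrow> (nat \<Rightarrow> complex)) set" where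
  "Pn n = Pgen_all n n"

definition pderiv_at :: "((nat \<Rightarrow> complex) \<Rightarrow> (nat \<Rightarrow> complex)) \<Rightarrow> nat \<Rightarrow> nat \<Rightarrow> (nat \<Rightarrow> complex) \<Rightarrow> complex" where
  "pderiv_at F j i z = deriv (\<lambda>t. F (z(i := t)) j) (z i)"

definition jac :: "nat \<Rightarrow> ((nat \<Rightarrow> complex) \<Rightarrow> (nat \<Rightarrow> complex)) \<Rightarrow> (nat \<Rightarrow> complex) \<Rightarrow> complex mat" where
  "jac n F z = mat n n (\<lambda>(i, j). pderiv_at F j i z)"

definition Jn :: "nat \<Rightarrow> ((nat \<Rightarrow> complex) \<Rightarrow> (nat \<Rightarrow> complex)) set" where
  "Jn n = {F \<in> Pn n. bij_betw F (Cn n) (Cn n) \<and>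
            (\<exists>G \<in> Pn n. \<forall>z \<in> Cn n. G (F z) = z \<and> F (G z) = z)}"

definition Jnd :: "nat \<Rightarrow> nat \<Rightarrow> ((nat \<Rightarrow> complex) \<Rightarrow> (nat \<Rightarrow> complex)) set" where
  "Jnd n d = Jn n \<inter> Pnd n d"

definition Jlin_nd :: "nat \<Rightarrow> nat \<Rightarrow> ((nat \<Rightarrow> complex) \<Rightarrow> (nat \<Rightarrow> complex)) set" where
  "Jlin_nd n d = {F \<in> Pnd n d. \<exists>c. c \<noteq> 0 \<and> (\<forall>z \<in> Cn n. det (jac n F z) = c)}"

definition join :: "nat \<Rightarrow> (nat \<Rightarrow> complex) \<Rightarrow> (nat \<Rightarrow> complex) \<Rightarrow> (nat \<Rightarrow> complex)" where
  "join n' z1 z2 = (\<lambda>i. if i < n' then z1 i else z2 (i - n'))"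

definition Rmap :: "nat \<Rightarrow> ((nat \<Rightarrow> complex) \<Rightarrow> (nat \<Rightarrow> complex)) \<Rightarrow> (nat \<Rightarrow> complex) \<Rightarrow> (nat \<Rightarrow> complex) \<Rightarrow> (nat \<Rightarrow> complex)" where
  "Rmap n' F z1 z2 = (\<lambda>k. F (join n' z1 z2) (n' + k))"

definition Jpart :: "nat \<Rightarrow> nat \<Rightarrow> nat \<Rightarrow> ((nat \<Rightarrow> complex) \<Rightarrow> (nat \<Rightarrow> complex)) set" where
  "Jpart n d n' = {F \<in> Pnd n d.
      (\<forall>z1 \<in> Cn n'. Rmap n' F z1 \<in> Jn (n - n')) \<and>
      bij_betw F (Cn n \<inter> F -` Cn n') (Cn n') \<and>
      (\<exists>H \<in> Pgen_all n' n. \<forall>y \<in> Cn n'. H y = inv_into (Cn n \<inter> F -` Cn n') F y)}"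

definition Jlin_part :: "nat \<Rightarrow> nat \<Rightarrow> nat \<Rightarrow> ((nat \<Rightarrow> complex) \<Rightarrow> (nat \<Rightarrow> complex)) set" where
  "Jlin_part n d n' = {F \<in> Pnd n d.
      (\<forall>z1 \<in> Cn n'. Rmap n' F z1 \<in> Jn (n - n')) \<and>
      (\<exists>c. c \<noteq> 0 \<and> (\<forall>z1 \<in> Cn n'.
          det (jac n F (join n' z1 (inv_into (Cn (n - n')) (Rmap n' F z1) (\<lambda>_. 0)))) = c))}"

end

theory Submission
  imports Defs
begin

text \<open>Splitting every monomial as \<open>z^\<alpha> = \<Sum>\<^sub>i (\<alpha>\<^sub>i / |\<alpha>|) z\<^sub>i z^(\<alpha> - e\<^sub>i)\<close> gives
  \<open>F\<^sub>j(z) = F\<^sub>j(0) + \<Sum>\<^sub>k z\<^sub>k G\<^sub>k\<^sub>j(z)\<close> with polynomials \<open>G\<^sub>k\<^sub>j\<close> of degree \<open>d - 1\<close> determined by \<open>F\<close>.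
  The map \<open>\<Phi>(F)(x, y) = (F(0) + \<Sum>\<^sub>k x\<^sub>k y\<^sub>k\<^sub>j, y - G(x))\<close> on \<open>\<complex>^n \<times> \<complex>^(n * n)\<close> has degree
  \<open>max 2 (d - 1) = d - 1\<close> and determines \<open>F(0)\<close> and \<open>G\<close>, hence \<open>F\<close>. For fixed \<open>x\<close> the second
  block is a translation in \<open>y\<close>, so the fibre of \<open>\<Phi>(F)\<close> over \<open>\<complex>^n \<times> {0}\<close> is the graph of \<open>G\<close>,
  on which \<open>\<Phi>(F)\<close> is a copy of \<open>F\<close>. Therefore \<open>\<Phi>(F)\<close> is invertible on that fibre with
  polynomial inverse \<open>y \<mapsto> (F\<inverse> y, G(F\<inverse> y))\<close> iff \<open>F\<close> has a polynomial inverse. At a graph point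
  the Jacobian of \<open>\<Phi>(F)\<close> is the block matrix \<open>[[G, -\<partial>G], [B, 1]]\<close>, where \<open>B\<close> has entry \<open>z\<^sub>k\<close>
  in row \<open>(k, j)\<close> and column \<open>j\<close>; its Schur complement \<open>G + \<partial>G \<cdot> B\<close> is \<open>J\<^sub>F\<close>, so the Jacobian
  determinants agree.\<close>

section \<open>Polynomial functions\<close>

type_synonym point = "nat \<Rightarrow> complex"
type_synonym polymap = "point \<Rightarrow> point"

definition monomial :: "nat \<Rightarrow> (nat \<Rightarrow> nat) \<Rightarrow> point \<Rightarrow> complex" where
  "monomial m \<alpha> z = (\<Prod>i<m. z i ^ \<alpha> i)"

lemma polyfun_monomial_iff:
  "polyfun m d f \<longleftrightarrow> (\<exists>c. \<forall>z. f z = (\<Sum>\<alpha>\<in>exps m d. c \<alpha> * monomial m \<alpha> z))"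
  by (simp add: polyfun_def monomial_def)

lemma finite_exps: "finite (exps m d)"
proof -
  have "exps m d \<subseteq> (\<lambda>g i. if i < m then g i else 0) ` ({..<m} \<rightarrow>\<^sub>E {..d})"
  proof
    fix \<alpha> assume \<alpha>: "\<alpha> \<in> exps m d"
    have "\<alpha> i \<le> d" if "i < m" for i
      using \<alpha> member_le_sum[of i "{..<m}" \<alpha>] that by (auto simp: exps_def)
    then have "restrict \<alpha> {..<m} \<in> {..<m} \<rightarrow>\<^sub>E {..d}" by auto
    moreover have "\<alpha> = (\<lambda>i. if i < m then restrict \<alpha> {..<m} i else 0)"
      using \<alpha> by (auto simp: exps_def fun_eq_iff)
    ultimately show "\<alpha> \<in> (\<lambda>g i. if i < m then g i else 0) ` ({..<m} \<rightarrow>\<^sub>E {..d})" by blast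
  qed
  then show ?thesis by (rule finite_subset) (intro finite_imageI finite_PiE, auto)
qed

lemma zero_in_exps [simp]: "(\<lambda>_. 0) \<in> exps m d"
  by (simp add: exps_def)

lemma monomial_zero [simp]: "monomial m (\<lambda>_. 0) z = 1"
  by (simp add: monomial_def)

lemma monomial_add: "monomial m (\<lambda>i. \<alpha> i + \<beta> i) z = monomial m \<alpha> z * monomial m \<beta> z"
  by (simp add: monomial_def power_add prod.distrib)

lemma polyfun_finite_sumI:
  assumes "finite S" "\<And>x. x \<in> S \<Longrightarrow> e x \<in> exps m d"
    and "\<And>z. f z = (\<Sum>x\<in>S. a x * monomial m (e x) z)"
  shows "polyfun m d f"
  unfolding polyfun_monomial_iff
proof (intro exI allI)
  fix z
  have "(\<Sum>\<gamma>\<in>exps m d. (\<Sum>x\<in>{x\<in>S. e x = \<gamma>}. a x) * monomial m \<gamma> z)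
      = (\<Sum>\<gamma>\<in>exps m d. \<Sum>x\<in>{x\<in>S. e x = \<gamma>}. a x * monomial m (e x) z)"
    by (auto simp: sum_distrib_right intro!: sum.cong)
  also have "\<dots> = (\<Sum>x\<in>S. a x * monomial m (e x) z)"
    by (rule sum.group) (use assms finite_exps in auto)
  finally show "f z = (\<Sum>\<gamma>\<in>exps m d. (\<Sum>x\<in>{x\<in>S. e x = \<gamma>}. a x) * monomial m \<gamma> z)"
    using assms(3) by simp
qed

lemma polyfun_const: "polyfun m d (\<lambda>z. c)"
  by (rule polyfun_finite_sumI[of "{()}" "\<lambda>_ _. 0" _ _ _ "\<lambda>_. c"]) auto

lemma polyfun_var:
  assumes "i < m" "1 \<le> d"
  shows "polyfun m d (\<lambda>z. z i)"
proof (rule polyfun_finite_sumI[of "{()}" "\<lambda>_ k. if k = i then 1 else 0" _ _ _ "\<lambda>_. 1"])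
  show "(\<lambda>k. if k = i then 1 else 0) \<in> exps m d"
    using assms by (auto simp: exps_def)
  fix z
  have "monomial m (\<lambda>k. if k = i then 1 else 0) z = (\<Prod>k<m. if k = i then z k else 1)"
    unfolding monomial_def by (intro prod.cong) auto
  also have "\<dots> = z i"
    using assms by (simp add: prod.delta)
  finally show "z i = (\<Sum>x\<in>{()}. 1 * monomial m (\<lambda>k. if k = i then 1 else 0) z)"
    by simp
qed auto

lemma polyfun_add:
  assumes "polyfun m d f" "polyfun m d g"
  shows "polyfun m d (\<lambda>z. f z + g z)"
proof -
  obtain c c' where "\<forall>z. f z = (\<Sum>\<alpha>\<in>exps m d. c \<alpha> * monomial m \<alpha> z)"
    and "\<forall>z. g z = (\<Sum>\<alpha>\<in>exps m d. c' \<alpha> * monomial m \<alpha> z)"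
    using assms unfolding polyfun_monomial_iff by blast
  then show ?thesis
    unfolding polyfun_monomial_iff
    by (intro exI[of _ "\<lambda>\<alpha>. c \<alpha> + c' \<alpha>"]) (simp add: sum.distrib distrib_right)
qed

lemma polyfun_mult:
  assumes "polyfun m a f" "polyfun m b g"
  shows "polyfun m (a + b) (\<lambda>z. f z * g z)"
proof -
  obtain c c' where c: "\<forall>z. f z = (\<Sum>\<alpha>\<in>exps m a. c \<alpha> * monomial m \<alpha> z)"
    and c': "\<forall>z. g z = (\<Sum>\<beta>\<in>exps m b. c' \<beta> * monomial m \<beta> z)"
    using assms unfolding polyfun_monomial_iff by blast
  show ?thesis
  proof (rule polyfun_finite_sumI[of "exps m a \<times> exps m b" "\<lambda>(\<alpha>, \<beta>) i. \<alpha> i + \<beta> i" _ _ _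
        "\<lambda>(\<alpha>, \<beta>). c \<alpha> * c' \<beta>"])
    show "finite (exps m a \<times> exps m b)"
      using finite_exps by auto
    show "(case x of (\<alpha>, \<beta>) \<Rightarrow> \<lambda>i. \<alpha> i + \<beta> i) \<in> exps m (a + b)"
      if "x \<in> exps m a \<times> exps m b" for x
      using that by (auto simp: exps_def sum.distrib)
    fix z
    have "f z * g z = (\<Sum>\<alpha>\<in>exps m a. \<Sum>\<beta>\<in>exps m b. (c \<alpha> * monomial m \<alpha> z) * (c' \<beta> * monomial m \<beta> z))"
      using c c' by (simp add: sum_product)
    also have "\<dots> = (\<Sum>x\<in>exps m a \<times> exps m b. (case x of (\<alpha>, \<beta>) \<Rightarrow> c \<alpha> * c' \<beta>) *
        monomial m (case x of (\<alpha>, \<beta>) \<Rightarrow> \<lambda>i. \<alpha> i + \<beta> i) z)"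
      by (subst sum.cartesian_product) (auto simp: monomial_add intro!: sum.cong)
    finally show "f z * g z = \<dots>" .
  qed
qed

lemma polyfun_mono:
  assumes "polyfun m d f" "d \<le> d'"
  shows "polyfun m d' f"
proof -
  obtain c where "\<forall>z. f z = (\<Sum>\<alpha>\<in>exps m d. c \<alpha> * monomial m \<alpha> z)"
    using assms unfolding polyfun_monomial_iff by blast
  then show ?thesis
    by (intro polyfun_finite_sumI[of "exps m d" id]) (use assms finite_exps in \<open>auto simp: exps_def\<close>)
qed

lemma polyfun_mono_vars:
  assumes "polyfun m d f" "m \<le> m'"
  shows "polyfun m' d f"
proof -
  obtain c where c: "\<forall>z. f z = (\<Sum>\<alpha>\<in>exps m d. c \<alpha> * monomial m \<alpha> z)"
    using assms unfolding polyfun_monomial_iff by blast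
  have "monomial m \<alpha> z = monomial m' \<alpha> z" if "\<alpha> \<in> exps m d" for \<alpha> z
    unfolding monomial_def
    by (rule prod.mono_neutral_left) (use that assms in \<open>auto simp: exps_def\<close>)
  moreover have "exps m d \<subseteq> exps m' d"
  proof
    fix \<alpha> assume \<alpha>: "\<alpha> \<in> exps m d"
    have "(\<Sum>i<m'. \<alpha> i) = (\<Sum>i<m. \<alpha> i)"
      by (rule sum.mono_neutral_right) (use \<alpha> assms in \<open>auto simp: exps_def\<close>)
    then show "\<alpha> \<in> exps m' d"
      using \<alpha> assms by (auto simp: exps_def)
  qed
  ultimately show ?thesis
    by (intro polyfun_finite_sumI[of "exps m d" id _ _ _ c]) (use c finite_exps in auto)
qed

lemma polyfun_cong_vars:
  assumes "polyfun m d f" "\<And>i. i < m \<Longrightarrow> x i = y i"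
  shows "f x = f y"
  using assms unfolding polyfun_def by auto

lemma polyfun_sum:
  assumes "finite I" "\<And>i. i \<in> I \<Longrightarrow> polyfun m d (f i)"
  shows "polyfun m d (\<lambda>z. \<Sum>i\<in>I. f i z)"
  using assms by (induction I rule: finite_induct) (auto intro: polyfun_add polyfun_const)

lemma polyfun_prod:
  assumes "finite I" "\<And>i. i \<in> I \<Longrightarrow> polyfun m (e i) (f i)"
  shows "polyfun m (\<Sum>i\<in>I. e i) (\<lambda>z. \<Prod>i\<in>I. f i z)"
  using assms by (induction I rule: finite_induct) (auto intro: polyfun_mult polyfun_const)

lemma polyfun_power:
  assumes "polyfun m e f"
  shows "polyfun m (k * e) (\<lambda>z. f z ^ k)"
  using polyfun_prod[of "{..<k}" m "\<lambda>_. e" "\<lambda>_. f"] assms by simp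

lemma polyfun_cmult:
  assumes "polyfun m d f"
  shows "polyfun m d (\<lambda>z. c * f z)"
  using polyfun_mult[OF polyfun_const[of m 0 c] assms] by simp

lemma polyfun_diff:
  assumes "polyfun m d f" "polyfun m d g"
  shows "polyfun m d (\<lambda>z. f z - g z)"
  using polyfun_add[OF assms(1) polyfun_cmult[OF assms(2), of "-1"]] by simp

lemma polyfun_compose:
  assumes f: "polyfun k d f" and h: "\<And>i. i < k \<Longrightarrow> polyfun m e (h i)"
  shows "polyfun m (d * e) (\<lambda>y. f (\<lambda>i. h i y))"
proof -
  obtain c where c: "\<forall>z. f z = (\<Sum>\<alpha>\<in>exps k d. c \<alpha> * (\<Prod>i<k. z i ^ \<alpha> i))"
    using f unfolding polyfun_def by blast
  have "polyfun m (d * e) (\<lambda>y. c \<alpha> * (\<Prod>i<k. h i y ^ \<alpha> i))" if \<alpha>: "\<alpha> \<in> exps k d" for \<alpha>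
  proof -
    have "polyfun m (\<Sum>i<k. \<alpha> i * e) (\<lambda>y. \<Prod>i<k. h i y ^ \<alpha> i)"
      by (intro polyfun_prod polyfun_power h) auto
    moreover have "(\<Sum>i<k. \<alpha> i * e) \<le> d * e"
      using \<alpha> by (simp add: exps_def flip: sum_distrib_right)
    ultimately show ?thesis
      by (intro polyfun_cmult) (rule polyfun_mono)
  qed
  then have "polyfun m (d * e) (\<lambda>y. \<Sum>\<alpha>\<in>exps k d. c \<alpha> * (\<Prod>i<k. h i y ^ \<alpha> i))"
    by (intro polyfun_sum finite_exps)
  then show ?thesis
    using c by simp
qed

definition partial_deriv :: "(point \<Rightarrow> complex) \<Rightarrow> nat \<Rightarrow> point \<Rightarrow> complex" where
  "partial_deriv f i z = deriv (\<lambda>t. f (z(i := t))) (z i)"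

lemma fun_upd_has_field_derivative:
  "((\<lambda>t. (z(i := t)) k) has_field_derivative of_bool (k = i)) (at t0)"
  by (cases "k = i") (auto intro!: derivative_eq_intros)

lemma polyfun_has_partial_deriv:
  assumes "polyfun m d f"
  shows "((\<lambda>t. f (z(i := t))) has_field_derivative partial_deriv f i z) (at (z i))"
proof -
  obtain c where c: "\<forall>z. f z = (\<Sum>\<alpha>\<in>exps m d. c \<alpha> * (\<Prod>k<m. z k ^ \<alpha> k))"
    using assms unfolding polyfun_def by blast
  have "(\<lambda>t. \<Prod>k<m. (z(i := t)) k ^ \<alpha> k) field_differentiable (at (z i))" for \<alpha>
    unfolding field_differentiable_def
    by (rule exI, rule has_field_derivative_prod, rule DERIV_power, rule fun_upd_has_field_derivative)
  then have "(\<lambda>t. \<Sum>\<alpha>\<in>exps m d. c \<alpha> * (\<Prod>k<m. (z(i := t)) k ^ \<alpha> k)) field_differentiable (at (z i))"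
    by (intro field_differentiable_sum field_differentiable_mult field_differentiable_const)
  then have "((\<lambda>t. f (z(i := t))) has_field_derivative deriv (\<lambda>t. f (z(i := t))) (z i)) (at (z i))"
    using c by (simp add: DERIV_deriv_iff_field_differentiable)
  then show ?thesis
    unfolding partial_deriv_def .
qed

section \<open>Euler decomposition\<close>

definition poly_coeff :: "nat \<Rightarrow> nat \<Rightarrow> (point \<Rightarrow> complex) \<Rightarrow> (nat \<Rightarrow> nat) \<Rightarrow> complex" where
  "poly_coeff m d f = (SOME c. \<forall>z. f z = (\<Sum>\<alpha>\<in>exps m d. c \<alpha> * monomial m \<alpha> z))"

text \<open>The weights \<open>\<alpha>\<^sub>i / |\<alpha>|\<close> sum to one over \<open>i\<close>, so that
  \<open>f z = f 0 + (\<Sum>i<m. z\<^sub>i * euler_quotient m d f i z)\<close>.\<close>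
definition euler_quotient :: "nat \<Rightarrow> nat \<Rightarrow> (point \<Rightarrow> complex) \<Rightarrow> nat \<Rightarrow> point \<Rightarrow> complex" where
  "euler_quotient m d f i z = (\<Sum>\<alpha>\<in>exps m d. if 0 < \<alpha> i then
     poly_coeff m d f \<alpha> * (of_nat (\<alpha> i) / of_nat (\<Sum>k<m. \<alpha> k)) * monomial m (\<alpha>(i := \<alpha> i - 1)) z
     else 0)"

lemma polyfun_poly_coeff:
  assumes "polyfun m d f"
  shows "f z = (\<Sum>\<alpha>\<in>exps m d. poly_coeff m d f \<alpha> * monomial m \<alpha> z)"
proof -
  have "\<exists>c. \<forall>z. f z = (\<Sum>\<alpha>\<in>exps m d. c \<alpha> * monomial m \<alpha> z)"
    using assms unfolding polyfun_monomial_iff .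
  from someI_ex[OF this] show ?thesis
    unfolding poly_coeff_def by blast
qed

lemma exps_decrement:
  assumes "\<alpha> \<in> exps m d" "i < m" "0 < \<alpha> i"
  shows "\<alpha>(i := \<alpha> i - 1) \<in> exps m (d - 1)"
proof -
  have "(\<Sum>k<m. \<alpha> k) = \<alpha> i + (\<Sum>k\<in>{..<m}-{i}. \<alpha> k)"
    using assms by (subst sum.remove[of _ i]) auto
  moreover have "(\<Sum>k<m. (\<alpha>(i := \<alpha> i - 1)) k) = (\<alpha> i - 1) + (\<Sum>k\<in>{..<m}-{i}. \<alpha> k)"
    using assms by (subst sum.remove[of _ i]) (auto intro!: sum.cong)
  ultimately show ?thesis
    using assms by (auto simp: exps_def)
qed

lemma monomial_decrement:
  assumes "i < m" "0 < \<alpha> i"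
  shows "z i * monomial m (\<alpha>(i := \<alpha> i - 1)) z = monomial m \<alpha> z"
proof -
  have "monomial m (\<alpha>(i := \<alpha> i - 1)) z = z i ^ (\<alpha> i - 1) * (\<Prod>k\<in>{..<m}-{i}. z k ^ \<alpha> k)"
    unfolding monomial_def using assms by (subst prod.remove[of _ i]) (auto intro!: prod.cong)
  moreover have "monomial m \<alpha> z = z i ^ \<alpha> i * (\<Prod>k\<in>{..<m}-{i}. z k ^ \<alpha> k)"
    unfolding monomial_def using assms by (subst prod.remove[of _ i]) auto
  moreover have "z i * z i ^ (\<alpha> i - 1) = z i ^ \<alpha> i"
    using assms by (cases "\<alpha> i") auto
  ultimately show ?thesis
    by (simp add: mult.assoc[symmetric])
qed

lemma monomial_euler_split:
  assumes "(\<Sum>k<m. \<alpha> k) \<noteq> 0"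
  shows "monomial m \<alpha> z = (\<Sum>i<m. z i * (if 0 < \<alpha> i then
           of_nat (\<alpha> i) / of_nat (\<Sum>k<m. \<alpha> k) * monomial m (\<alpha>(i := \<alpha> i - 1)) z else 0))"
proof -
  have "(\<Sum>i<m. z i * (if 0 < \<alpha> i then
          of_nat (\<alpha> i) / of_nat (\<Sum>k<m. \<alpha> k) * monomial m (\<alpha>(i := \<alpha> i - 1)) z else 0))
      = (\<Sum>i<m. monomial m \<alpha> z * of_nat (\<alpha> i) / of_nat (\<Sum>k<m. \<alpha> k))"
    by (intro sum.cong refl) (auto simp flip: monomial_decrement)
  also have "\<dots> = monomial m \<alpha> z * of_nat (\<Sum>i<m. \<alpha> i) / of_nat (\<Sum>k<m. \<alpha> k)"
    by (simp add: sum_distrib_left sum_divide_distrib)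
  also have "\<dots> = monomial m \<alpha> z"
    using assms of_nat_eq_0_iff by (metis nonzero_mult_div_cancel_right)
  finally show ?thesis ..
qed

lemma polyfun_euler_quotient:
  assumes "i < m"
  shows "polyfun m (d - 1) (euler_quotient m d f i)"
proof (rule polyfun_finite_sumI[of "exps m d" "\<lambda>\<alpha>. if 0 < \<alpha> i then \<alpha>(i := \<alpha> i - 1) else (\<lambda>_. 0)" _ _ _
      "\<lambda>\<alpha>. if 0 < \<alpha> i then poly_coeff m d f \<alpha> * (of_nat (\<alpha> i) / of_nat (\<Sum>k<m. \<alpha> k)) else 0"])
  show "(if 0 < \<alpha> i then \<alpha>(i := \<alpha> i - 1) else (\<lambda>_. 0)) \<in> exps m (d - 1)" if "\<alpha> \<in> exps m d" for \<alpha>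
    using exps_decrement[OF that assms] by auto
qed (auto simp: euler_quotient_def finite_exps intro!: sum.cong)

lemma euler_quotient_cong_vars:
  assumes "\<And>k. k < m \<Longrightarrow> x k = y k"
  shows "euler_quotient m d f i x = euler_quotient m d f i y"
  unfolding euler_quotient_def monomial_def using assms by (intro sum.cong refl) auto

lemma euler_decomposition:
  assumes "polyfun m d f"
  shows "f z = f (\<lambda>_. 0) + (\<Sum>i<m. z i * euler_quotient m d f i z)"
proof -
  define c where "c = poly_coeff m d f"
  define r :: "(nat \<Rightarrow> nat) \<Rightarrow> nat \<Rightarrow> complex" where "r \<alpha> i = of_nat (\<alpha> i) / of_nat (\<Sum>k<m. \<alpha> k)" for \<alpha> i
  define K where "K = (\<Sum>\<alpha>\<in>exps m d. if (\<Sum>k<m. \<alpha> k) = 0 then c \<alpha> else 0)"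
  have split_term: "c \<alpha> * monomial m \<alpha> z = (if (\<Sum>k<m. \<alpha> k) = 0 then c \<alpha> else 0) +
      (\<Sum>i<m. z i * (if 0 < \<alpha> i then c \<alpha> * r \<alpha> i * monomial m (\<alpha>(i := \<alpha> i - 1)) z else 0))" for \<alpha> z
  proof (cases "(\<Sum>k<m. \<alpha> k) = 0")
    case True
    then show ?thesis by (simp add: monomial_def)
  next
    case False
    then show ?thesis
      unfolding r_def monomial_euler_split[OF False]
      using False by (auto simp: sum_distrib_left algebra_simps if_distrib cong: if_cong)
  qed
  have "f z = K + (\<Sum>i<m. z i * euler_quotient m d f i z)" for z
  proof -
    have "f z = (\<Sum>\<alpha>\<in>exps m d. c \<alpha> * monomial m \<alpha> z)"
      unfolding c_def by (rule polyfun_poly_coeff[OF assms])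
    also have "\<dots> = K + (\<Sum>\<alpha>\<in>exps m d. \<Sum>i<m.
        z i * (if 0 < \<alpha> i then c \<alpha> * r \<alpha> i * monomial m (\<alpha>(i := \<alpha> i - 1)) z else 0))"
      unfolding K_def split_term sum.distrib ..
    also have "\<dots> = K + (\<Sum>i<m. z i * euler_quotient m d f i z)"
      unfolding c_def r_def euler_quotient_def by (subst sum.swap) (simp add: sum_distrib_left)
    finally show ?thesis .
  qed
  from this[of "\<lambda>_. 0"] this[of z] show ?thesis
    by simp
qed

section \<open>The map \<open>\<Phi>\<close>\<close>

lemma flat_index:
  fixes j k n :: nat
  assumes "j < n" "k < n"
  shows "k * n + j < n * n" "(k * n + j) div n = k" "(k * n + j) mod n = j"
proof -
  have "k * n + j < (k + 1) * n"
    using assms by simp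
  also have "\<dots> \<le> n * n"
    using assms by (intro mult_right_mono) auto
  finally show "k * n + j < n * n" .
  show "(k * n + j) div n = k" "(k * n + j) mod n = j"
    using assms by auto
qed

lemma flat_index_bounds:
  fixes m n :: nat
  assumes "m < n * n"
  shows "m div n < n" "m mod n < n"
proof -
  have "0 < n"
    using assms by (cases n) auto
  then show "m div n < n" "m mod n < n"
    using assms by (auto simp: div_less_iff_less_mult)
qed

lemma total_dim: "n * (n + 1) = n + n * n" "n * (n + 1) - n = n * (n::nat)"
  by (simp_all add: algebra_simps)

lemma Pnd_polyfun: "F \<in> Pnd n d \<Longrightarrow> j < n \<Longrightarrow> polyfun n d (\<lambda>z. F z j)"
  by (auto simp: Pnd_def Pgen_def)

lemma Pnd_vanishes: "F \<in> Pnd n d \<Longrightarrow> n \<le> j \<Longrightarrow> F z j = 0"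
  by (auto simp: Pnd_def Pgen_def)

lemma Pnd_in_Cn: "F \<in> Pnd n d \<Longrightarrow> F z \<in> Cn n"
  by (auto simp: Pnd_def Pgen_def Cn_def)

abbreviation euler_entry :: "nat \<Rightarrow> nat \<Rightarrow> polymap \<Rightarrow> nat \<Rightarrow> nat \<Rightarrow> point \<Rightarrow> complex" where
  "euler_entry n d F i j \<equiv> euler_quotient n d (\<lambda>z. F z j) i"

text \<open>A point \<open>(x, y) \<in> \<complex>^n \<times> \<complex>^(n * n)\<close> is stored with \<open>y\<^sub>k\<^sub>j\<close> in coordinate \<open>n + k * n + j\<close>.
  Writing \<open>G\<^sub>k\<^sub>j\<close> for \<open>euler_entry n d F k j\<close>, \<open>\<Phi>(F)(x, y) = (F(0) + \<Sum>\<^sub>k x\<^sub>k y\<^sub>k\<^sub>j, y - G(x))\<close>;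
  it has degree \<open>max 2 (d - 1)\<close> and sends the graph point \<open>(z, G(z))\<close> to \<open>F(z)\<close>.\<close>
definition Phi :: "nat \<Rightarrow> nat \<Rightarrow> polymap \<Rightarrow> point \<Rightarrow> point" where
  "Phi n d F = (\<lambda>x m. if m < n then F (\<lambda>_. 0) m + (\<Sum>k<n. x k * x (n + k * n + m))
     else if m < n + n * n then x m - euler_entry n d F ((m - n) div n) ((m - n) mod n) x else 0)"

definition euler_vector :: "nat \<Rightarrow> nat \<Rightarrow> polymap \<Rightarrow> point \<Rightarrow> point" where
  "euler_vector n d F z = (\<lambda>k. if k < n * n then euler_entry n d F (k div n) (k mod n) z else 0)"

definition graph_point :: "nat \<Rightarrow> nat \<Rightarrow> polymap \<Rightarrow> point \<Rightarrow> point" where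
  "graph_point n d F z = join n z (euler_vector n d F z)"

lemma graph_point_base: "k < n \<Longrightarrow> graph_point n d F z k = z k"
  by (simp add: graph_point_def join_def)

lemma graph_point_fibre: "graph_point n d F z (n + m) = euler_vector n d F z m"
  by (simp add: graph_point_def join_def)

lemma graph_point_in_Cn: "graph_point n d F z \<in> Cn (n * (n + 1))"
  unfolding Cn_def graph_point_def join_def euler_vector_def by (auto simp: total_dim)

lemma inj_on_graph_point: "inj_on (graph_point n d F) (Cn n)"
proof (rule inj_onI)
  fix z z' assume z: "z \<in> Cn n" "z' \<in> Cn n" and eq: "graph_point n d F z = graph_point n d F z'"
  show "z = z'"
  proof
    fix i
    show "z i = z' i"
      using z graph_point_base[of i n d F z] graph_point_base[of i n d F z'] eq
      by (cases "i < n") (auto simp: Cn_def)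
  qed
qed

lemma euler_vector_in_Cn: "euler_vector n d F z \<in> Cn (n * n)"
  by (auto simp: euler_vector_def Cn_def)

lemma Phi_in_Pnd:
  assumes F: "F \<in> Pnd n d" and d: "3 \<le> d"
  shows "Phi n d F \<in> Pnd (n * (n + 1)) (d - 1)"
  unfolding Pnd_def Pgen_def
proof (intro CollectI conjI allI impI)
  fix z j assume "n * (n + 1) \<le> j"
  then show "Phi n d F z j = 0"
    by (simp add: Phi_def total_dim)
next
  fix j assume j: "j < n * (n + 1)"
  show "polyfun (n * (n + 1)) (d - 1) (\<lambda>z. Phi n d F z j)"
  proof (cases "j < n")
    case True
    have "polyfun (n * (n + 1)) (1 + 1) (\<lambda>z. z k * z (n + k * n + j))" if "k < n" for k
      using flat_index[OF True that] that
      by (intro polyfun_mult polyfun_var) (auto simp: total_dim)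
    then have "polyfun (n * (n + 1)) (1 + 1) (\<lambda>z. \<Sum>k<n. z k * z (n + k * n + j))"
      by (intro polyfun_sum) auto
    then have "polyfun (n * (n + 1)) (d - 1) (\<lambda>z. \<Sum>k<n. z k * z (n + k * n + j))"
      by (rule polyfun_mono) (use d in simp)
    then show ?thesis
      using True polyfun_add[OF polyfun_const] by (simp add: Phi_def)
  next
    case False
    with j have "j - n < n * n"
      by (simp add: total_dim)
    then have "polyfun (n * (n + 1)) (d - 1) (euler_entry n d F ((j - n) div n) ((j - n) mod n))"
      by (intro polyfun_mono_vars[OF polyfun_euler_quotient]) (auto simp: flat_index_bounds)
    moreover have "polyfun (n * (n + 1)) (d - 1) (\<lambda>z. z j)"
      using j d by (intro polyfun_var) auto
    ultimately show ?thesis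
      using False j by (simp add: Phi_def total_dim polyfun_diff)
  qed
qed

lemma Phi_graph_point:
  assumes F: "F \<in> Pnd n d"
  shows "Phi n d F (graph_point n d F z) = F z"
proof
  fix m
  let ?x = "graph_point n d F z"
  have G: "euler_entry n d F a b ?x = euler_entry n d F a b z" for a b
    by (rule euler_quotient_cong_vars) (simp add: graph_point_base)
  show "Phi n d F ?x m = F z m"
  proof (cases "m < n")
    case True
    have "?x (n + k * n + m) = euler_entry n d F k m z" if "k < n" for k
      using graph_point_fibre[of n d F z "k * n + m"] flat_index[OF True that]
      by (simp add: add.assoc euler_vector_def)
    then have "(\<Sum>k<n. ?x k * ?x (n + k * n + m)) = (\<Sum>k<n. z k * euler_entry n d F k m z)"
      by (intro sum.cong) (auto simp: graph_point_base)
    then show ?thesis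
      using True euler_decomposition[OF Pnd_polyfun[OF F True], of z] by (simp add: Phi_def)
  next
    case False
    show ?thesis
    proof (cases "m < n + n * n")
      case True
      have "?x m = euler_vector n d F z (m - n)"
        using graph_point_fibre[of n d F z "m - n"] False by simp
      then show ?thesis
        using True False Pnd_vanishes[OF F, of m] G by (simp add: Phi_def euler_vector_def)
    qed (use False Pnd_vanishes[OF F, of m] in \<open>simp add: Phi_def\<close>)
  qed
qed

text \<open>The second block of \<open>\<Phi>(F)(x, y)\<close> vanishes exactly when \<open>y = G(x)\<close>.\<close>
lemma Phi_fibre_eq:
  assumes F: "F \<in> Pnd n d"
  shows "Cn (n * (n + 1)) \<inter> Phi n d F -` Cn n = graph_point n d F ` Cn n"
proof
  show "graph_point n d F ` Cn n \<subseteq> Cn (n * (n + 1)) \<inter> Phi n d F -` Cn n"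
    using graph_point_in_Cn Phi_graph_point[OF F] Pnd_in_Cn[OF F] by auto
next
  show "Cn (n * (n + 1)) \<inter> Phi n d F -` Cn n \<subseteq> graph_point n d F ` Cn n"
  proof
    fix x assume x: "x \<in> Cn (n * (n + 1)) \<inter> Phi n d F -` Cn n"
    define z where "z = (\<lambda>i. if i < n then x i else 0)"
    have "x i = graph_point n d F z i" for i
    proof (cases "i < n")
      case True
      then show ?thesis by (simp add: graph_point_base z_def)
    next
      case False
      show ?thesis
      proof (cases "i < n + n * n")
        case True
        have "Phi n d F x i = 0"
          using x False by (auto simp: Cn_def)
        then have "x i = euler_entry n d F ((i - n) div n) ((i - n) mod n) x"
          using True False by (simp add: Phi_def)
        also have "\<dots> = euler_entry n d F ((i - n) div n) ((i - n) mod n) z"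
          by (rule euler_quotient_cong_vars) (simp add: z_def)
        also have "\<dots> = graph_point n d F z i"
          using graph_point_fibre[of n d F z "i - n"] True False by (simp add: euler_vector_def)
        finally show ?thesis .
      next
        case False
        then show ?thesis
          using x graph_point_in_Cn[of n d F z] by (auto simp: Cn_def total_dim)
      qed
    qed
    moreover have "z \<in> Cn n"
      by (auto simp: z_def Cn_def)
    ultimately show "x \<in> graph_point n d F ` Cn n"
      by (auto intro!: image_eqI[of x _ z])
  qed
qed

lemma Rmap_Phi:
  assumes "z1 \<in> Cn n"
  shows "Rmap n (Phi n d F) z1 = (\<lambda>z2 k. if k < n * n then z2 k - euler_vector n d F z1 k else 0)"
proof (intro ext)
  fix z2 k
  have "euler_entry n d F a b (join n z1 z2) = euler_entry n d F a b z1" for a b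
    by (rule euler_quotient_cong_vars) (simp add: join_def)
  then show "Rmap n (Phi n d F) z1 z2 k = (if k < n * n then z2 k - euler_vector n d F z1 k else 0)"
    unfolding Rmap_def Phi_def by (auto simp: join_def euler_vector_def)
qed

lemma Rmap_Phi_in_Jn:
  assumes "z1 \<in> Cn n"
  shows "Rmap n (Phi n d F) z1 \<in> Jn (n * (n + 1) - n)"
proof -
  let ?g = "euler_vector n d F z1"
  let ?R = "\<lambda>z2 k. if k < n * n then z2 k - ?g k else 0"
  let ?S = "\<lambda>z2 k. if k < n * n then z2 k + ?g k else 0"
  have R: "?R \<in> Pn (n * n)"
    unfolding Pn_def Pgen_all_def Pgen_def
    by (intro exI[of _ 1] CollectI conjI allI impI) (auto intro!: polyfun_diff polyfun_var polyfun_const)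
  have S: "?S \<in> Pn (n * n)"
    unfolding Pn_def Pgen_all_def Pgen_def
    by (intro exI[of _ 1] CollectI conjI allI impI) (auto intro!: polyfun_add polyfun_var polyfun_const)
  have inverse: "?S (?R z) = z" "?R (?S z) = z" if "z \<in> Cn (n * n)" for z
    using that by (auto simp: Cn_def fun_eq_iff)
  have "bij_betw ?R (Cn (n * n)) (Cn (n * n))"
    by (rule bij_betw_byWitness[of _ ?S]) (use inverse in \<open>auto simp: Cn_def\<close>)
  then have "?R \<in> Jn (n * n)"
    unfolding Jn_def using R S inverse by (intro CollectI conjI bexI[OF _ S] ballI) auto
  then show ?thesis
    unfolding Rmap_Phi[OF assms] total_dim(2) .
qed

lemma inv_Rmap_Phi_zero:
  assumes "z1 \<in> Cn n"
  shows "inv_into (Cn (n * (n + 1) - n)) (Rmap n (Phi n d F) z1) (\<lambda>_. 0) = euler_vector n d F z1"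
proof (rule inv_into_f_eq)
  show "inj_on (Rmap n (Phi n d F) z1) (Cn (n * (n + 1) - n))"
    using Rmap_Phi_in_Jn[OF assms] unfolding Jn_def bij_betw_def by blast
  show "euler_vector n d F z1 \<in> Cn (n * (n + 1) - n)"
    using euler_vector_in_Cn by (simp add: total_dim)
  show "Rmap n (Phi n d F) z1 (euler_vector n d F z1) = (\<lambda>_. 0)"
    unfolding Rmap_Phi[OF assms] by auto
qed

section \<open>Jacobian of \<open>\<Phi>(F)\<close> along the graph of \<open>G\<close>\<close>

lemma det_four_block_mat_one_lower_right:
  fixes A :: "'a :: idom mat"
  assumes A: "A \<in> carrier_mat n n" and C: "C \<in> carrier_mat n m" and B: "B \<in> carrier_mat m n"
  shows "det (four_block_mat A C B (1\<^sub>m m)) = det (A - C * B)"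
proof -
  let ?P = "four_block_mat (A - C * B) C (0\<^sub>m m n) (1\<^sub>m m)"
  let ?Q = "four_block_mat (1\<^sub>m n) (0\<^sub>m n m) B (1\<^sub>m m)"
  have ACB: "A - C * B \<in> carrier_mat n n"
    using A B C by auto
  have "?P * ?Q = four_block_mat ((A - C * B) * 1\<^sub>m n + C * B) ((A - C * B) * 0\<^sub>m n m + C * 1\<^sub>m m)
      (0\<^sub>m m n * 1\<^sub>m n + 1\<^sub>m m * B) (0\<^sub>m m n * 0\<^sub>m n m + 1\<^sub>m m * 1\<^sub>m m)"
    by (rule mult_four_block_mat[OF ACB C _ one_carrier_mat one_carrier_mat _ B one_carrier_mat]) auto
  also have "\<dots> = four_block_mat A C B (1\<^sub>m m)"
    using A B C by (intro cong_four_block_mat; intro eq_matI) auto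
  finally have "four_block_mat A C B (1\<^sub>m m) = ?P * ?Q" ..
  moreover have "det ?P = det (A - C * B)"
    using det_four_block_mat_lower_left_zero[OF ACB C refl one_carrier_mat] by simp
  moreover have "det ?Q = 1"
    using det_four_block_mat_upper_right_zero[OF one_carrier_mat refl B one_carrier_mat] by simp
  moreover have "?P \<in> carrier_mat (n + m) (n + m)" "?Q \<in> carrier_mat (n + m) (n + m)"
    using ACB by auto
  ultimately show ?thesis
    by (simp add: det_mult)
qed

lemma sum_flat_index_mod:
  fixes n j :: nat
  assumes "j < n"
  shows "(\<Sum>m<n * n. if m mod n = j then f (m div n) else 0) = (\<Sum>k<n. f k)"
proof -
  have "{m \<in> {..<n * n}. m mod n = j} = (\<lambda>k. k * n + j) ` {..<n}"
  proof
    show "{m \<in> {..<n * n}. m mod n = j} \<subseteq> (\<lambda>k. k * n + j) ` {..<n}"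
    proof
      fix m assume "m \<in> {m \<in> {..<n * n}. m mod n = j}"
      then have "m = (m div n) * n + j" "m div n < n"
        using flat_index_bounds[of m n] div_mult_mod_eq[of m n] by auto
      then show "m \<in> (\<lambda>k. k * n + j) ` {..<n}" by blast
    qed
    show "(\<lambda>k. k * n + j) ` {..<n} \<subseteq> {m \<in> {..<n * n}. m mod n = j}"
      using flat_index[OF assms] by auto
  qed
  moreover have "inj_on (\<lambda>k. k * n + j) {..<n}"
    using assms by (auto simp: inj_on_def)
  ultimately have "(\<Sum>m\<in>{m \<in> {..<n * n}. m mod n = j}. f (m div n)) = (\<Sum>k<n. f ((k * n + j) div n))"
    by (simp add: sum.reindex)
  also have "\<dots> = (\<Sum>k<n. f k)"
    using flat_index[OF assms] by simp
  finally show ?thesis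
    by (simp only: sum.inter_filter[OF finite_lessThan])
qed

lemma pderiv_at_Pnd:
  assumes F: "F \<in> Pnd n d" and i: "i < n" and j: "j < n"
  shows "pderiv_at F j i z = euler_entry n d F i j z + (\<Sum>k<n. z k * partial_deriv (euler_entry n d F k j) i z)"
proof -
  have "(\<lambda>t. F (z(i := t)) j) = (\<lambda>t. F (\<lambda>_. 0) j + (\<Sum>k<n. (z(i := t)) k * euler_entry n d F k j (z(i := t))))"
    using euler_decomposition[OF Pnd_polyfun[OF F j]] by blast
  moreover have "((\<lambda>t. F (\<lambda>_. 0) j + (\<Sum>k<n. (z(i := t)) k * euler_entry n d F k j (z(i := t)))) has_field_derivative
      (0 + (\<Sum>k<n. of_bool (k = i) * euler_entry n d F k j (z(i := z i)) +
        partial_deriv (euler_entry n d F k j) i z * (z(i := z i)) k))) (at (z i))"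
    by (intro DERIV_add DERIV_const DERIV_sum DERIV_mult fun_upd_has_field_derivative
        polyfun_has_partial_deriv[OF polyfun_euler_quotient]) auto
  ultimately have "pderiv_at F j i z = (\<Sum>k<n. of_bool (k = i) * euler_entry n d F k j z) +
      (\<Sum>k<n. z k * partial_deriv (euler_entry n d F k j) i z)"
    unfolding pderiv_at_def by (simp add: DERIV_imp_deriv sum.distrib mult.commute del: sum_of_bool_mult_eq)
  then show ?thesis
    using i by (simp add: of_bool_def sum.delta if_distrib[of "\<lambda>c. c * _"] cong: if_cong)
qed

lemma pderiv_at_Phi_base:
  assumes j: "j < n" and i: "i < n + n * n"
  shows "pderiv_at (Phi n d F) j i (graph_point n d F z) =
    (if i < n then euler_entry n d F i j z else if (i - n) mod n = j then z ((i - n) div n) else 0)"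
proof -
  define p where "p = graph_point n d F z"
  have "(\<lambda>t. Phi n d F (p(i := t)) j) = (\<lambda>t. F (\<lambda>_. 0) j + (\<Sum>k<n. (p(i := t)) k * (p(i := t)) (n + k * n + j)))"
    using j by (auto simp: Phi_def)
  moreover have "((\<lambda>t. F (\<lambda>_. 0) j + (\<Sum>k<n. (p(i := t)) k * (p(i := t)) (n + k * n + j))) has_field_derivative
      (0 + (\<Sum>k<n. of_bool (k = i) * (p(i := p i)) (n + k * n + j) +
        of_bool (n + k * n + j = i) * (p(i := p i)) k))) (at (p i))"
    by (intro DERIV_add DERIV_const DERIV_sum DERIV_mult fun_upd_has_field_derivative)
  ultimately have "pderiv_at (Phi n d F) j i p =
      (\<Sum>k<n. if k = i then p (n + k * n + j) else 0) + (\<Sum>k<n. if n + k * n + j = i then p k else 0)"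
    unfolding pderiv_at_def
    by (simp add: DERIV_imp_deriv sum.distrib of_bool_def if_distrib[of "\<lambda>c. c * _"] cong: if_cong)
  also have "\<dots> = (if i < n then euler_entry n d F i j z else if (i - n) mod n = j then z ((i - n) div n) else 0)"
  proof (cases "i < n")
    case True
    have "p (n + i * n + j) = euler_entry n d F i j z"
      using graph_point_fibre[of n d F z "i * n + j"] flat_index[OF j True]
      by (simp add: p_def add.assoc euler_vector_def)
    then show ?thesis
      using True by simp
  next
    case False
    with i have "i - n < n * n"
      by simp
    then have dn: "(i - n) div n < n"
      by (rule flat_index_bounds)
    have "n + k * n + j = i \<longleftrightarrow> k = (i - n) div n \<and> (i - n) mod n = j" if "k < n" for k
      using False flat_index[OF j that] div_mult_mod_eq[of "i - n" n] by auto
    then have "(\<Sum>k<n. if n + k * n + j = i then p k else 0)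
        = (\<Sum>k<n. if k = (i - n) div n then (if (i - n) mod n = j then p k else 0) else 0)"
      by (intro sum.cong) auto
    then show ?thesis
      using False dn by (simp add: p_def graph_point_base)
  qed
  finally show ?thesis
    unfolding p_def .
qed

lemma pderiv_at_Phi_fibre:
  assumes j: "n \<le> j" "j < n + n * n" and i: "i < n + n * n"
  shows "pderiv_at (Phi n d F) j i (graph_point n d F z) = of_bool (j = i) -
    (if i < n then partial_deriv (euler_entry n d F ((j - n) div n) ((j - n) mod n)) i z else 0)"
proof -
  define p where "p = graph_point n d F z"
  define G where "G = euler_entry n d F ((j - n) div n) ((j - n) mod n)"
  have "(j - n) div n < n"
    using j by (intro flat_index_bounds) simp
  then have G_poly: "polyfun n (d - 1) G"
    unfolding G_def by (rule polyfun_euler_quotient)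
  have Phi_j: "(\<lambda>t. Phi n d F (p(i := t)) j) = (\<lambda>t. (p(i := t)) j - G (p(i := t)))"
    using j by (auto simp: Phi_def G_def)
  show ?thesis
  proof (cases "i < n")
    case True
    have "G (p(i := t)) = G (z(i := t))" for t
      by (rule polyfun_cong_vars[OF G_poly]) (simp add: p_def graph_point_base)
    then have Phi_j': "(\<lambda>t. Phi n d F (p(i := t)) j) = (\<lambda>t. (p(i := t)) j - G (z(i := t)))"
      unfolding Phi_j by simp
    have "p i = z i"
      using True by (simp add: p_def graph_point_base)
    moreover have "((\<lambda>t. (p(i := t)) j - G (z(i := t))) has_field_derivative
        (of_bool (j = i) - partial_deriv G i z)) (at (z i))"
      by (intro DERIV_diff fun_upd_has_field_derivative polyfun_has_partial_deriv[OF G_poly])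
    ultimately have "pderiv_at (Phi n d F) j i p = of_bool (j = i) - partial_deriv G i z"
      unfolding pderiv_at_def Phi_j' by (simp add: DERIV_imp_deriv)
    then show ?thesis
      using True unfolding p_def G_def by simp
  next
    case False
    have "G (p(i := t)) = G p" for t
      by (rule polyfun_cong_vars[OF G_poly]) (use False in simp)
    then have Phi_j': "(\<lambda>t. Phi n d F (p(i := t)) j) = (\<lambda>t. (p(i := t)) j - G p)"
      unfolding Phi_j by simp
    have "((\<lambda>t. (p(i := t)) j - G p) has_field_derivative (of_bool (j = i) - 0)) (at (p i))"
      by (intro DERIV_diff fun_upd_has_field_derivative DERIV_const)
    then have "pderiv_at (Phi n d F) j i p = of_bool (j = i)"
      unfolding pderiv_at_def Phi_j' by (simp add: DERIV_imp_deriv)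
    then show ?thesis
      using False unfolding p_def by simp
  qed
qed

definition euler_matrix :: "nat \<Rightarrow> nat \<Rightarrow> polymap \<Rightarrow> point \<Rightarrow> complex mat" where
  "euler_matrix n d F z = mat n n (\<lambda>(i, j). euler_entry n d F i j z)"

definition euler_jacobian :: "nat \<Rightarrow> nat \<Rightarrow> polymap \<Rightarrow> point \<Rightarrow> complex mat" where
  "euler_jacobian n d F z = mat n (n * n) (\<lambda>(i, m). partial_deriv (euler_entry n d F (m div n) (m mod n)) i z)"

definition coord_matrix :: "nat \<Rightarrow> point \<Rightarrow> complex mat" where
  "coord_matrix n z = mat (n * n) n (\<lambda>(m, j). if m mod n = j then z (m div n) else 0)"

lemma jac_Phi_graph_point:
  "jac (n * (n + 1)) (Phi n d F) (graph_point n d F z) =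
    four_block_mat (euler_matrix n d F z) (- euler_jacobian n d F z) (coord_matrix n z) (1\<^sub>m (n * n))"
  (is "?J = ?B")
proof (rule eq_matI)
  show "dim_row ?J = dim_row ?B" "dim_col ?J = dim_col ?B"
    by (simp_all add: jac_def euler_matrix_def total_dim)
  fix i j assume "i < dim_row ?B" "j < dim_col ?B"
  then have i: "i < n + n * n" and j: "j < n + n * n"
    by (auto simp: euler_matrix_def)
  then have "?J $$ (i, j) = pderiv_at (Phi n d F) j i (graph_point n d F z)"
    unfolding jac_def total_dim by simp
  also have "\<dots> = ?B $$ (i, j)"
  proof (cases "j < n")
    case True
    then show ?thesis
      unfolding pderiv_at_Phi_base[OF True i] using i
      by (auto simp: euler_matrix_def euler_jacobian_def coord_matrix_def)
  next
    case False
    then show ?thesis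
      unfolding pderiv_at_Phi_fibre[OF leI[OF False] j i] using i j
      by (auto simp: euler_matrix_def euler_jacobian_def coord_matrix_def)
  qed
  finally show "?J $$ (i, j) = ?B $$ (i, j)" .
qed

lemma jac_eq_schur_complement:
  assumes F: "F \<in> Pnd n d"
  shows "euler_matrix n d F z - (- euler_jacobian n d F z) * coord_matrix n z = jac n F z"
proof (rule eq_matI)
  fix i j assume "i < dim_row (jac n F z)" "j < dim_col (jac n F z)"
  then have i: "i < n" and j: "j < n"
    by (auto simp: jac_def)
  have "((- euler_jacobian n d F z) * coord_matrix n z) $$ (i, j)
      = - (\<Sum>m<n * n. partial_deriv (euler_entry n d F (m div n) (m mod n)) i z *
          (if m mod n = j then z (m div n) else 0))"
    using i j by (simp add: euler_jacobian_def coord_matrix_def scalar_prod_def atLeast0LessThan)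
  also have "\<dots> = - (\<Sum>m<n * n. if m mod n = j then partial_deriv (euler_entry n d F (m div n) j) i z * z (m div n) else 0)"
    by (intro arg_cong[where f = uminus] sum.cong) auto
  also have "\<dots> = - (\<Sum>k<n. z k * partial_deriv (euler_entry n d F k j) i z)"
    using sum_flat_index_mod[OF j, of "\<lambda>k. partial_deriv (euler_entry n d F k j) i z * z k"]
    by (simp add: mult.commute)
  finally show "(euler_matrix n d F z - (- euler_jacobian n d F z) * coord_matrix n z) $$ (i, j) = jac n F z $$ (i, j)"
    using i j pderiv_at_Pnd[OF F i j, of z]
    by (simp add: euler_matrix_def euler_jacobian_def coord_matrix_def jac_def)
qed (auto simp: euler_matrix_def coord_matrix_def euler_jacobian_def jac_def)

lemma det_jac_Phi_graph_point:
  assumes "F \<in> Pnd n d"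
  shows "det (jac (n * (n + 1)) (Phi n d F) (graph_point n d F z)) = det (jac n F z)"
  unfolding jac_Phi_graph_point jac_eq_schur_complement[OF assms, symmetric]
  by (rule det_four_block_mat_one_lower_right) (auto simp: euler_matrix_def euler_jacobian_def coord_matrix_def)

section \<open>Invertibility\<close>

lemma inj_on_Phi: "inj_on (Phi n d) (Pnd n d)"
proof (rule inj_onI)
  fix F F' assume F: "F \<in> Pnd n d" and F': "F' \<in> Pnd n d" and eq: "Phi n d F = Phi n d F'"
  have G: "euler_entry n d F i j x = euler_entry n d F' i j x" if "i < n" "j < n" for i j x
  proof -
    have "Phi n d F x (n + (i * n + j)) = Phi n d F' x (n + (i * n + j))"
      using eq by simp
    then show ?thesis
      using flat_index[OF that(2,1)] by (simp add: Phi_def)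
  qed
  have F0: "F (\<lambda>_. 0) j = F' (\<lambda>_. 0) j" if "j < n" for j
    using fun_cong[OF fun_cong[OF eq, of "\<lambda>_. 0"], of j] that by (simp add: Phi_def)
  show "F = F'"
  proof (intro ext)
    fix z j
    show "F z j = F' z j"
    proof (cases "j < n")
      case True
      then show ?thesis
        using euler_decomposition[OF Pnd_polyfun[OF F True], of z]
          euler_decomposition[OF Pnd_polyfun[OF F' True], of z] F0[OF True] G[OF _ True]
        by simp
    qed (use Pnd_vanishes[OF F] Pnd_vanishes[OF F'] in auto)
  qed
qed

lemma Phi_in_Jlin_part_iff:
  assumes F: "F \<in> Pnd n d" and d: "3 \<le> d"
  shows "Phi n d F \<in> Jlin_part (n * (n + 1)) (d - 1) n \<longleftrightarrow> F \<in> Jlin_nd n d"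
proof -
  have "det (jac (n * (n + 1)) (Phi n d F)
      (join n z1 (inv_into (Cn (n * (n + 1) - n)) (Rmap n (Phi n d F) z1) (\<lambda>_. 0)))) = det (jac n F z1)"
    if "z1 \<in> Cn n" for z1
    unfolding inv_Rmap_Phi_zero[OF that] graph_point_def[symmetric] det_jac_Phi_graph_point[OF F] ..
  then show ?thesis
    unfolding Jlin_part_def Jlin_nd_def using Phi_in_Pnd[OF F d] Rmap_Phi_in_Jn F by auto
qed

lemma bij_betw_Phi_fibre_iff:
  assumes F: "F \<in> Pnd n d"
  shows "bij_betw (Phi n d F) (Cn (n * (n + 1)) \<inter> Phi n d F -` Cn n) (Cn n) \<longleftrightarrow> bij_betw F (Cn n) (Cn n)"
proof -
  have "bij_betw (graph_point n d F) (Cn n) (graph_point n d F ` Cn n)"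
    by (rule bij_betw_imageI[OF inj_on_graph_point refl])
  moreover have "Phi n d F \<circ> graph_point n d F = F"
    using Phi_graph_point[OF F] by auto
  ultimately show ?thesis
    unfolding Phi_fibre_eq[OF F] by (metis bij_betw_comp_iff)
qed

lemma inv_into_Phi_fibre:
  assumes F: "F \<in> Pnd n d" and bij: "bij_betw F (Cn n) (Cn n)" and y: "y \<in> Cn n"
  shows "inv_into (Cn (n * (n + 1)) \<inter> Phi n d F -` Cn n) (Phi n d F) y = graph_point n d F (inv_into (Cn n) F y)"
proof (rule inv_into_f_eq)
  show "inj_on (Phi n d F) (Cn (n * (n + 1)) \<inter> Phi n d F -` Cn n)"
    using bij bij_betw_Phi_fibre_iff[OF F] bij_betw_def by blast
  have y_im: "y \<in> F ` Cn n"
    using bij y by (simp add: bij_betw_def)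
  show "graph_point n d F (inv_into (Cn n) F y) \<in> Cn (n * (n + 1)) \<inter> Phi n d F -` Cn n"
    unfolding Phi_fibre_eq[OF F] using inv_into_into[OF y_im] by blast
  show "Phi n d F (graph_point n d F (inv_into (Cn n) F y)) = y"
    unfolding Phi_graph_point[OF F] by (rule f_inv_into_f[OF y_im])
qed

lemma Pn_in_Cn: "G \<in> Pn n \<Longrightarrow> G y \<in> Cn n"
  by (auto simp: Pn_def Pgen_all_def Pgen_def Cn_def)

lemma graph_point_comp_in_Pgen_all:
  assumes G: "G \<in> Pn n"
  shows "(\<lambda>y. graph_point n d F (G y)) \<in> Pgen_all n (n * (n + 1))"
proof -
  obtain e where e: "G \<in> Pgen n n e"
    using G by (auto simp: Pn_def Pgen_all_def)
  have "polyfun n (max e ((d - 1) * e)) (\<lambda>y. graph_point n d F (G y) i)" if i: "i < n * (n + 1)" for i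
  proof (cases "i < n")
    case True
    then have "polyfun n e (\<lambda>y. G y i)"
      using e by (simp add: Pgen_def)
    then show ?thesis
      using True by (simp add: graph_point_base polyfun_mono)
  next
    case False
    with i have "i - n < n * n"
      by (simp add: total_dim)
    then have "polyfun n ((d - 1) * e) (\<lambda>y. euler_entry n d F ((i - n) div n) ((i - n) mod n) (\<lambda>k. G y k))"
      by (rule polyfun_compose[OF polyfun_euler_quotient[OF flat_index_bounds(1)]]) (use e in \<open>simp add: Pgen_def\<close>)
    moreover have "graph_point n d F (G y) i = euler_entry n d F ((i - n) div n) ((i - n) mod n) (G y)" for y
      using graph_point_fibre[of n d F "G y" "i - n"] False \<open>i - n < n * n\<close> by (simp add: euler_vector_def)
    ultimately show ?thesis
      by (simp add: polyfun_mono)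
  qed
  moreover have "graph_point n d F (G y) i = 0" if "n * (n + 1) \<le> i" for y i
    using graph_point_in_Cn that by (auto simp: Cn_def)
  ultimately show ?thesis
    unfolding Pgen_all_def Pgen_def by blast
qed

lemma truncation_in_Pn:
  assumes "H \<in> Pgen_all n (n * (n + 1))"
  shows "(\<lambda>y i. if i < n then H y i else 0) \<in> Pn n"
proof -
  obtain e where "H \<in> Pgen n (n * (n + 1)) e"
    using assms by (auto simp: Pgen_all_def)
  moreover have "n \<le> n * (n + 1)"
    by simp
  ultimately show ?thesis
    unfolding Pn_def Pgen_all_def Pgen_def
    by (intro CollectI exI[of _ e] conjI allI impI) (auto simp: Pgen_def)
qed

lemma Phi_in_Jpart_iff:
  assumes F: "F \<in> Pnd n d" and d: "3 \<le> d"
  shows "Phi n d F \<in> Jpart (n * (n + 1)) (d - 1) n \<longleftrightarrow> F \<in> Jnd n d"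
proof
  assume J: "Phi n d F \<in> Jpart (n * (n + 1)) (d - 1) n"
  then have bij: "bij_betw F (Cn n) (Cn n)"
    unfolding Jpart_def bij_betw_Phi_fibre_iff[OF F, symmetric] by blast
  then have inj: "inj_on F (Cn n)" and surj: "F ` Cn n = Cn n"
    by (simp_all add: bij_betw_def)
  obtain H where H: "H \<in> Pgen_all n (n * (n + 1))"
    and H_inv: "\<And>y. y \<in> Cn n \<Longrightarrow> H y = inv_into (Cn (n * (n + 1)) \<inter> Phi n d F -` Cn n) (Phi n d F) y"
    using J unfolding Jpart_def by blast
  define G where "G = (\<lambda>y i. if i < n then H y i else 0)"
  have G_inv: "G y = inv_into (Cn n) F y" if "y \<in> Cn n" for y
  proof -
    have "inv_into (Cn n) F y \<in> Cn n"
      using inv_into_into[of y F "Cn n"] surj that by simp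
    then show ?thesis
      using that H_inv inv_into_Phi_fibre[OF F bij that] by (auto simp: G_def graph_point_base Cn_def)
  qed
  have "G (F z) = z \<and> F (G z) = z" if "z \<in> Cn n" for z
  proof
    show "G (F z) = z"
      using G_inv[OF Pnd_in_Cn[OF F]] inv_into_f_f[OF inj that] by simp
    show "F (G z) = z"
      using G_inv[OF that] f_inv_into_f[of z F "Cn n"] surj that by simp
  qed
  moreover have "G \<in> Pn n"
    unfolding G_def by (rule truncation_in_Pn[OF H])
  moreover have "F \<in> Pn n"
    using F by (auto simp: Pnd_def Pn_def Pgen_all_def)
  ultimately show "F \<in> Jnd n d"
    unfolding Jnd_def Jn_def using F bij by blast
next
  assume "F \<in> Jnd n d"
  then obtain G where bij: "bij_betw F (Cn n) (Cn n)" and G: "G \<in> Pn n"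
    and G_inv: "\<And>z. z \<in> Cn n \<Longrightarrow> G (F z) = z \<and> F (G z) = z"
    unfolding Jnd_def Jn_def by blast
  have "G y = inv_into (Cn n) F y" if "y \<in> Cn n" for y
    using bij G_inv[OF that] Pn_in_Cn[OF G] by (intro inv_into_f_eq[symmetric]) (auto simp: bij_betw_def)
  then have "\<forall>y\<in>Cn n. graph_point n d F (G y) = inv_into (Cn (n * (n + 1)) \<inter> Phi n d F -` Cn n) (Phi n d F) y"
    using inv_into_Phi_fibre[OF F bij] by simp
  moreover have "bij_betw (Phi n d F) (Cn (n * (n + 1)) \<inter> Phi n d F -` Cn n) (Cn n)"
    using bij bij_betw_Phi_fibre_iff[OF F] by blast
  ultimately show "Phi n d F \<in> Jpart (n * (n + 1)) (d - 1) n"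
    unfolding Jpart_def mem_Collect_eq
    using Phi_in_Pnd[OF F d] Rmap_Phi_in_Jn[of _ n d F] graph_point_comp_in_Pgen_all[OF G, of d F]
    by (intro conjI ballI bexI[of _ "\<lambda>y. graph_point n d F (G y)"]) simp_all
qed

theorem mainTheorem1:
  fixes n d :: nat
  assumes "d \<ge> 3"
  shows "\<exists>\<Phi>. inj_on \<Phi> (Pnd n d) \<and> \<Phi> ` Pnd n d \<subseteq> Pnd (n * (n + 1)) (d - 1) \<and>
            \<Phi> ` Jlin_nd n d = Jlin_part (n * (n + 1)) (d - 1) n \<inter> \<Phi> ` Pnd n d \<and>
            \<Phi> ` Jnd n d = Jpart (n * (n + 1)) (d - 1) n \<inter> \<Phi> ` Pnd n d"
proof (intro exI conjI)
  show "inj_on (Phi n d) (Pnd n d)"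
    by (rule inj_on_Phi)
  show "Phi n d ` Pnd n d \<subseteq> Pnd (n * (n + 1)) (d - 1)"
    using Phi_in_Pnd assms by auto
  have "Jlin_nd n d \<subseteq> Pnd n d" "Jnd n d \<subseteq> Pnd n d"
    by (auto simp: Jlin_nd_def Jnd_def)
  then show "Phi n d ` Jlin_nd n d = Jlin_part (n * (n + 1)) (d - 1) n \<inter> Phi n d ` Pnd n d"
    and "Phi n d ` Jnd n d = Jpart (n * (n + 1)) (d - 1) n \<inter> Phi n d ` Pnd n d"
    using Phi_in_Jlin_part_iff[OF _ assms] Phi_in_Jpart_iff[OF _ assms] by blast+
qed

end
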